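(* Let $d>1$ and $N\ge 1$. Suppose $x_1,\dots,x_N\in\mathbb{H}^d$ and $w_1,\dots,w_N\in\mathbb{R}$ satisfy: (1) $|x_i|^2=1$ for $i=1,\dots,N$; (2) $|\langle x_i,x_j\rangle|^2=|\langle x_{i'},x_{j'}\rangle|^2$ for all $1\le i<j\le N$ and $1\le i'<j'\le N$; (3) $\sum_{i=1}^N w_i x_ix_i^\dagger = I_d$. Then $w_1=\cdots=w_N=d/N$ and $\{x_1,\dots,x_N\}$ is a tight simplex in $\mathbb{H}\mathbb{P}^{d-1}$.
   Context: $\mathbb{H}$ denotes the quaternions; $\langle x,y\rangle=x^\dagger y$ on $\mathbb{H}^d$, with $\dagger$ the conjugate transpose. $\mathbb{H}\mathbb{P}^{d-1}$ is the space of quaternionic lines in $\mathbb{H}^d$ (scalars acting on the right), points represented by unit vectors. A tight simplex of $N$ points in $\mathbb{H}\mathbb{P}^{d-1}$ is a set of $N$ distinct points $x_1,\dots,x_N$ with $|\langle x_i,x_j\rangle|^2=\frac{N-d}{d(N-1)}$ for all $i\ne j$. *)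

theory Defs
  imports "HOL-Analysis.Analysis"
begin

datatype quat = Quat (qre: real) (qim_i: real) (qim_j: real) (qim_k: real)

fun qmul :: "quat \<Rightarrow> quat \<Rightarrow> quat" where
  "qmul (Quat a1 b1 c1 d1) (Quat a2 b2 c2 d2) =
     Quat (a1*a2 - b1*b2 - c1*c2 - d1*d2)
          (a1*b2 + b1*a2 + c1*d2 - d1*c2)
          (a1*c2 - b1*d2 + c1*a2 + d1*b2)
          (a1*d2 + b1*c2 - c1*b2 + d1*a2)"

fun qcnj :: "quat \<Rightarrow> quat" where
  "qcnj (Quat a b c d) = Quat a (-b) (-c) (-d)"

definition qscale :: "real \<Rightarrow> quat \<Rightarrow> quat" where
  "qscale r q = Quat (r * qre q) (r * qim_i q) (r * qim_j q) (r * qim_k q)"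

definition qnorm2 :: "quat \<Rightarrow> real" where
  "qnorm2 q = (qre q)^2 + (qim_i q)^2 + (qim_j q)^2 + (qim_k q)^2"

definition qsum :: "('a \<Rightarrow> quat) \<Rightarrow> 'a set \<Rightarrow> quat" where
  "qsum f A = Quat (\<Sum>a\<in>A. qre (f a)) (\<Sum>a\<in>A. qim_i (f a))
                   (\<Sum>a\<in>A. qim_j (f a)) (\<Sum>a\<in>A. qim_k (f a))"

definition qzero :: quat where "qzero = Quat 0 0 0 0"
definition qone :: quat where "qone = Quat 1 0 0 0"

text \<open>Vectors in H^d are functions from a finite index type 'd (with CARD('d) = d).
  Inner product <x,y> = x^dagger y = sum_k conj(x_k) y_k.\<close>
definition hinner :: "('d::finite \<Rightarrow> quat) \<Rightarrow> ('d \<Rightarrow> quat) \<Rightarrow> quat" where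
  "hinner x y = qsum (\<lambda>k. qmul (qcnj (x k)) (y k)) UNIV"

definition hnorm2 :: "('d::finite \<Rightarrow> quat) \<Rightarrow> real" where
  "hnorm2 x = (\<Sum>k\<in>UNIV. qnorm2 (x k))"

text \<open>The quaternionic line through x (scalars acting on the right): a point of HP^{d-1}.\<close>
definition hline :: "('d::finite \<Rightarrow> quat) \<Rightarrow> ('d \<Rightarrow> quat) set" where
  "hline x = {y. \<exists>q. y = (\<lambda>k. qmul (x k) q)}"

definition tight_simplex :: "nat \<Rightarrow> (nat \<Rightarrow> ('d::finite \<Rightarrow> quat)) \<Rightarrow> bool" where
  "tight_simplex N x \<longleftrightarrow>
     (\<forall>i<N. hnorm2 (x i) = 1) \<and>
     (\<forall>i<N. \<forall>j<N. i \<noteq> j \<longrightarrow> hline (x i) \<noteq> hline (x j)) \<and>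
     (\<forall>i<N. \<forall>j<N. i \<noteq> j \<longrightarrow>
        qnorm2 (hinner (x i) (x j)) =
          (real N - real CARD('d)) / (real CARD('d) * (real N - 1)))"

end

theory Submission
  imports Defs
begin

text \<open>Expanding \<open>|\<langle>x\<^sub>i,y\<rangle>|\<^sup>2 = \<langle>y,x\<^sub>i\<rangle>\<langle>x\<^sub>i,y\<rangle>\<close> and summing against the frame identity
  \<open>\<Sum> w\<^sub>i x\<^sub>i x\<^sub>i\<^sup>\<dagger> = I\<close> gives Parseval's identity \<open>\<Sum> w\<^sub>i |\<langle>x\<^sub>i,y\<rangle>|\<^sup>2 = |y|\<^sup>2\<close>, and taking the
  trace (the \<open>x\<^sub>i\<close> being unit vectors) gives \<open>\<Sum> w\<^sub>i = d\<close>. For \<open>y = x\<^sub>j\<close> Parseval reads \<open>w\<^sub>j + c (d - w\<^sub>j) = 1\<close>, where \<open>c\<close> is the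
  common value of \<open>|\<langle>x\<^sub>i,x\<^sub>j\<rangle>|\<^sup>2\<close>; as \<open>d > 1\<close> this forces \<open>c \<noteq> 1\<close>, so all \<open>w\<^sub>j\<close> are equal, hence
  \<open>d/N\<close>, and then \<open>c = (N - d)/(d(N - 1))\<close>. Two unit vectors spanning the same
  quaternionic line would have \<open>|\<langle>x\<^sub>i,x\<^sub>j\<rangle>|\<^sup>2 = 1 = c\<close>, so the lines are distinct.\<close>

instantiation quat :: real_algebra_1
begin

definition "0 = qzero"
definition "1 = qone"
definition "a + b = Quat (qre a + qre b) (qim_i a + qim_i b) (qim_j a + qim_j b) (qim_k a + qim_k b)"
definition "a - b = Quat (qre a - qre b) (qim_i a - qim_i b) (qim_j a - qim_j b) (qim_k a - qim_k b)"
definition "- a = Quat (- qre a) (- qim_i a) (- qim_j a) (- qim_k a)"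
definition "a * b = qmul a b"
definition "scaleR = qscale"

instance
proof
  fix a b c :: quat and r s :: real
  show "a * b * c = a * (b * c)"
    by (cases a; cases b; cases c) (simp add: times_quat_def algebra_simps)
  show "(a + b) * c = a * c + b * c"
    by (cases a; cases b; cases c) (simp add: times_quat_def plus_quat_def algebra_simps)
  show "a * (b + c) = a * b + a * c"
    by (cases a; cases b; cases c) (simp add: times_quat_def plus_quat_def algebra_simps)
  show "a + b + c = a + (b + c)"
    by (simp add: plus_quat_def)
  show "a + b = b + a"
    by (simp add: plus_quat_def)
  show "0 + a = a"
    by (simp add: plus_quat_def zero_quat_def qzero_def)
  show "- a + a = 0"
    by (simp add: plus_quat_def zero_quat_def qzero_def uminus_quat_def)
  show "a - b = a + - b"
    by (simp add: plus_quat_def minus_quat_def uminus_quat_def)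
  show "1 * a = a"
    by (cases a) (simp add: one_quat_def qone_def times_quat_def)
  show "a * 1 = a"
    by (cases a) (simp add: one_quat_def qone_def times_quat_def)
  show "(0::quat) \<noteq> 1"
    by (simp add: zero_quat_def qzero_def one_quat_def qone_def)
  show "r *\<^sub>R (a + b) = r *\<^sub>R a + r *\<^sub>R b"
    by (simp add: scaleR_quat_def qscale_def plus_quat_def algebra_simps)
  show "(r + s) *\<^sub>R a = r *\<^sub>R a + s *\<^sub>R a"
    by (simp add: scaleR_quat_def qscale_def plus_quat_def algebra_simps)
  show "r *\<^sub>R s *\<^sub>R a = (r * s) *\<^sub>R a"
    by (simp add: scaleR_quat_def qscale_def)
  show "1 *\<^sub>R a = a"
    by (simp add: scaleR_quat_def qscale_def)
  show "r *\<^sub>R a * b = r *\<^sub>R (a * b)"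
    by (cases a; cases b) (simp add: scaleR_quat_def qscale_def times_quat_def algebra_simps)
  show "a * r *\<^sub>R b = r *\<^sub>R (a * b)"
    by (cases a; cases b) (simp add: scaleR_quat_def qscale_def times_quat_def algebra_simps)
qed

end

lemma quat_sum_components:
  "qre (sum f A) = (\<Sum>a\<in>A. qre (f a))" "qim_i (sum f A) = (\<Sum>a\<in>A. qim_i (f a))"
  "qim_j (sum f A) = (\<Sum>a\<in>A. qim_j (f a))" "qim_k (sum f A) = (\<Sum>a\<in>A. qim_k (f a))"
  by (induction A rule: infinite_finite_induct)
     (auto simp: zero_quat_def qzero_def plus_quat_def)

lemma qsum_eq_sum: "qsum f A = sum f A"
  unfolding qsum_def by (rule quat.expand) (simp add: quat_sum_components)

lemma qre_scaleR [simp]: "qre (r *\<^sub>R q) = r * qre q"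
  by (simp add: scaleR_quat_def qscale_def)

lemma qre_of_real [simp]: "qre (of_real r) = r"
  by (simp add: of_real_def scaleR_quat_def qscale_def one_quat_def qone_def)

lemma qcnj_add: "qcnj (a + b) = qcnj a + qcnj b"
  by (cases a; cases b) (simp add: plus_quat_def)

lemma qcnj_sum: "qcnj (sum f A) = (\<Sum>a\<in>A. qcnj (f a))"
  by (induction A rule: infinite_finite_induct) (auto simp: zero_quat_def qzero_def qcnj_add)

lemma qcnj_mult: "qcnj (a * b) = qcnj b * qcnj a"
  by (cases a; cases b) (simp add: times_quat_def algebra_simps)

lemma qcnj_qcnj [simp]: "qcnj (qcnj a) = a"
  by (cases a) simp

lemma qnorm2_qcnj: "qnorm2 (qcnj q) = qnorm2 q"
  by (cases q) (simp add: qnorm2_def)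

lemma qnorm2_mult: "qnorm2 (a * b) = qnorm2 a * qnorm2 b"
  by (cases a; cases b) (simp add: qnorm2_def times_quat_def power2_eq_square algebra_simps)

lemma qnorm2_of_real: "qnorm2 (of_real r) = r\<^sup>2"
  by (simp add: qnorm2_def of_real_def scaleR_quat_def qscale_def one_quat_def qone_def)

lemma qcnj_mult_self: "qcnj q * q = of_real (qnorm2 q)"
  by (cases q) (simp add: qnorm2_def times_quat_def of_real_def scaleR_quat_def qscale_def
      one_quat_def qone_def power2_eq_square)

lemma mult_qcnj_self: "q * qcnj q = of_real (qnorm2 q)"
  by (cases q) (simp add: qnorm2_def times_quat_def of_real_def scaleR_quat_def qscale_def
      one_quat_def qone_def power2_eq_square)

lemma qnorm2_eq_qre: "qnorm2 q = qre (qcnj q * q)"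
  by (simp add: qcnj_mult_self)

lemma hinner_eq_sum: "hinner x y = (\<Sum>k\<in>UNIV. qcnj (x k) * y k)"
  by (simp add: hinner_def qsum_eq_sum times_quat_def)

lemma hinner_commute: "hinner y x = qcnj (hinner x y)"
  by (simp add: hinner_eq_sum qcnj_sum qcnj_mult)

lemma hinner_self: "hinner x x = of_real (hnorm2 x)"
  by (simp add: hinner_eq_sum qcnj_mult_self hnorm2_def)

lemma qnorm2_hinner_commute: "qnorm2 (hinner y x) = qnorm2 (hinner x y)"
  by (simp add: hinner_commute[of y x] qnorm2_qcnj)

lemma hline_eq_imp_qnorm2_hinner_eq_1:
  fixes x y :: "'d::finite \<Rightarrow> quat"
  assumes "hnorm2 x = 1" "hnorm2 y = 1" "hline x = hline y"
  shows "qnorm2 (hinner y x) = 1"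
proof -
  have "x \<in> hline x"
    unfolding hline_def by (auto intro!: exI[of _ 1] simp: times_quat_def[symmetric])
  with assms(3) obtain p where p: "x = (\<lambda>k. y k * p)"
    unfolding hline_def by (auto simp: times_quat_def)
  have "hnorm2 x = hnorm2 y * qnorm2 p"
    by (simp add: p hnorm2_def qnorm2_mult sum_distrib_right)
  with assms(1,2) have "qnorm2 p = 1" by simp
  moreover have "hinner y x = hinner y y * p"
    by (simp add: p hinner_eq_sum sum_distrib_right mult.assoc)
  then have "hinner y x = p"
    using assms(2) by (simp add: hinner_self)
  ultimately show ?thesis by simp
qed

context
  fixes x :: "nat \<Rightarrow> ('d::finite \<Rightarrow> quat)" and w :: "nat \<Rightarrow> real" and N :: nat
  assumes frame: "\<And>k l. (\<Sum>i<N. w i *\<^sub>R (x i k * qcnj (x i l))) = (if k = l then 1 else 0)"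
begin

lemma frame_parseval: "(\<Sum>i<N. w i * qnorm2 (hinner (x i) y)) = hnorm2 y"
proof -
  have "(\<Sum>i<N. w i *\<^sub>R (qcnj (hinner (x i) y) * hinner (x i) y))
      = (\<Sum>i<N. \<Sum>l\<in>UNIV. \<Sum>k\<in>UNIV. w i *\<^sub>R (qcnj (y k) * (x i k * qcnj (x i l)) * y l))"
    by (simp add: hinner_eq_sum qcnj_sum qcnj_mult sum_distrib_left sum_distrib_right
        scaleR_sum_right mult.assoc)
  also have "\<dots> = (\<Sum>l\<in>UNIV. \<Sum>k\<in>UNIV. \<Sum>i<N. w i *\<^sub>R (qcnj (y k) * (x i k * qcnj (x i l)) * y l))"
    by (subst sum.swap) (simp add: sum.swap[of _ "{..<N}"])
  also have "\<dots> = (\<Sum>k\<in>UNIV. \<Sum>l\<in>UNIV. qcnj (y k) * (\<Sum>i<N. w i *\<^sub>R (x i k * qcnj (x i l))) * y l)"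
    by (subst sum.swap) (simp add: sum_distrib_left sum_distrib_right scaleR_sum_right)
  also have "\<dots> = hinner y y"
    by (simp add: frame hinner_eq_sum if_distrib if_distribR cong: if_cong)
  finally have "qre (\<Sum>i<N. w i *\<^sub>R (qcnj (hinner (x i) y) * hinner (x i) y)) = hnorm2 y"
    by (simp add: hinner_self)
  then show ?thesis
    by (simp add: qnorm2_eq_qre quat_sum_components)
qed

lemma frame_trace: "(\<Sum>i<N. w i * hnorm2 (x i)) = real CARD('d)"
proof -
  have diag: "(\<Sum>i<N. w i * qnorm2 (x i k)) = 1" for k
    using arg_cong[OF frame[of k k], of qre]
    by (simp add: quat_sum_components mult_qcnj_self one_quat_def qone_def)
  have "(\<Sum>i<N. w i * hnorm2 (x i)) = (\<Sum>k\<in>UNIV. \<Sum>i<N. w i * qnorm2 (x i k))"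
    by (simp add: hnorm2_def sum_distrib_left) (rule sum.swap)
  then show ?thesis by (simp add: diag)
qed

end

lemma equiangular_parseval_weights:
  fixes w :: "nat \<Rightarrow> real" and q :: "nat \<Rightarrow> nat \<Rightarrow> real" and d c :: real
  assumes "d > 1" and "N \<ge> 2"
    and trace: "(\<Sum>i<N. w i) = d"
    and diag: "\<And>j. j < N \<Longrightarrow> q j j = 1"
    and offdiag: "\<And>i j. i < N \<Longrightarrow> j < N \<Longrightarrow> i \<noteq> j \<Longrightarrow> q i j = c"
    and parseval: "\<And>j. j < N \<Longrightarrow> (\<Sum>i<N. w i * q i j) = 1"
  shows "\<forall>j<N. w j = d / real N" and "c = (real N - d) / (d * (real N - 1))" and "c \<noteq> 1"
proof -
  have row: "w j + c * (d - w j) = 1" if "j < N" for j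
  proof -
    have "(\<Sum>i<N. w i * q i j) = w j * q j j + (\<Sum>i\<in>{..<N}-{j}. c * w i)"
      using that offdiag by (simp add: sum.remove[of _ j] mult.commute)
    also have "\<dots> = w j + c * (d - w j)"
      using that trace diag by (simp add: sum_distrib_left[symmetric] sum_diff1)
    finally show ?thesis using parseval that by simp
  qed
  show "c \<noteq> 1"
    using row[of 0] assms(1,2) by auto
  then have w_eq: "w j = (1 - c * d) / (1 - c)" if "j < N" for j
    using row[OF that] by (simp add: field_simps)
  have "d = real N * ((1 - c * d) / (1 - c))"
    using trace w_eq by simp
  with assms(2) have "(1 - c * d) / (1 - c) = d / real N"
    by (simp add: field_simps)
  with w_eq show weights: "\<forall>j<N. w j = d / real N"
    by simp
  have "d / real N + c * (d - d / real N) = 1"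
    using row[of 0] weights assms(2) by simp
  with assms(1,2) show "c = (real N - d) / (d * (real N - 1))"
    by (simp add: field_simps)
qed

theorem proposition4p1:
  fixes N :: nat
    and x :: "nat \<Rightarrow> ('d::finite \<Rightarrow> quat)"
    and w :: "nat \<Rightarrow> real"
  assumes d_gt: "CARD('d) > 1"
    and N_ge: "N \<ge> 1"
    and unit: "\<forall>i<N. hnorm2 (x i) = 1"
    and equi: "\<forall>i j i' j'. i < j \<and> j < N \<and> i' < j' \<and> j' < N \<longrightarrow>
                 qnorm2 (hinner (x i) (x j)) = qnorm2 (hinner (x i') (x j'))"
    and frame: "\<forall>k l. qsum (\<lambda>i. qscale (w i) (qmul (x i k) (qcnj (x i l)))) {..<N}
                   = (if k = l then qone else qzero)"
  shows "(\<forall>i<N. w i = real CARD('d) / real N) \<and> tight_simplex N x"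
proof -
  define d where "d = real CARD('d)"
  define q where "q i j = qnorm2 (hinner (x i) (x j))" for i j
  have frame': "(\<Sum>i<N. w i *\<^sub>R (x i k * qcnj (x i l))) = (if k = l then 1 else 0)" for k l
    using frame by (simp add: qsum_eq_sum scaleR_quat_def times_quat_def one_quat_def zero_quat_def)
  have trace: "(\<Sum>i<N. w i) = d"
    using frame_trace[OF frame'] unit by (simp add: d_def)
  have parseval: "(\<Sum>i<N. w i * q i j) = 1" if "j < N" for j
    using frame_parseval[OF frame', of "x j"] unit that by (simp add: q_def)
  have diag: "q j j = 1" if "j < N" for j
    using unit that by (simp add: q_def hinner_self qnorm2_of_real del: of_real_1)
  have "N \<ge> 2"
  proof (rule ccontr)
    assume "\<not> N \<ge> 2"
    with N_ge have "N = 1" by simp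
    with parseval[of 0] diag[of 0] trace d_gt show False by (simp add: d_def)
  qed
  have offdiag: "q i j = q 0 1" if "i < N" "j < N" "i \<noteq> j" for i j
    using that \<open>N \<ge> 2\<close> equi[rule_format, of i j 0 1] equi[rule_format, of j i 0 1]
    by (cases "i < j") (auto simp: q_def qnorm2_hinner_commute[of "x i" "x j"])
  note gram = equiangular_parseval_weights[OF _ \<open>N \<ge> 2\<close> trace diag offdiag parseval]
  have "hline (x i) \<noteq> hline (x j)" if "i < N" "j < N" "i \<noteq> j" for i j
    using hline_eq_imp_qnorm2_hinner_eq_1[of "x i" "x j"] offdiag[of j i] gram(3) unit that d_gt
    by (auto simp: q_def d_def)
  with gram unit offdiag d_gt show ?thesis
    unfolding tight_simplex_def by (auto simp: q_def d_def)
qed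

end
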